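(* Let $M$ and $M'$ be two stable matchings in an instance $I$ of SPA-S, and let $M^\land$ be the assignment defined from $M,M'$ in the context. If a lecturer $l_k$ is undersubscribed in $M^\land$, then $l_k$ is undersubscribed in both $M$ and $M'$.
   Context: An instance $I$ of SPA-S consists of a finite set $\mathcal{S}$ of students, a finite set $\mathcal{P}$ of projects and a finite set $\mathcal{L}$ of lecturers. Each student $s_i$ ranks a subset $A_i\subseteq\mathcal{P}$ (its acceptable projects) in strict order. Each project is offered by exactly one lecturer; lecturer $l_k$ offers a nonempty set $P_k\subseteq\mathcal{P}$, the $P_k$ partitioning $\mathcal{P}$. Each lecturer $l_k$ ranks in strict order the students who find at least one project of $P_k$ acceptable. Projects have capacities $c_j\in\mathbb{Z}^+$, lecturers have capacities $d_k\in\mathbb{Z}^+$ with $\max\{c_j:p_j\in P_k\}\le d_k\le\sum\{c_j:p_j\in P_k\}$. A pair $(s_i,p_j)$, $p_j$ offered by $l_k$, is acceptable if $p_j\in A_i$ and $s_i$ is on $l_k$'s list. A matching $M$ is a set of acceptable pairs with each student in at most one pair, $|M(p_j)|\le c_j$, $|M(l_k)|\le d_k$, where for an assignment $M$ (a set of acceptable pairs), $M(s_i)$, $M(p_j)$, $M(l_k)$ denote the project of $s_i$, the students assigned to $p_j$, and the students assigned to projects of $l_k$. Undersubscribed/full means fewer than/exactly capacity many assigned students. An acceptable pair $(s_i,p_j)\notin M$ ($p_j$ offered by $l_k$) blocks $M$ if ($s_i$ is unassigned or prefers $p_j$ to $M(s_i)$) and one of: (P1) $p_j$ and $l_k$ undersubscribed;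 (P2) $p_j$ undersubscribed, $l_k$ full, $s_i\in M(l_k)$; (P3) $p_j$ undersubscribed, $l_k$ full, $l_k$ prefers $s_i$ to the worst student of $M(l_k)$; (P4) $p_j$ full and $l_k$ prefers $s_i$ to the worst student of $M(p_j)$. $M$ is stable if it has no blocking pair. Given stable matchings $M,M'$, $M^\land$ is the assignment in which each student unassigned in both $M$ and $M'$ is unassigned, each student assigned to the same project in both is assigned to that project, and every other student is assigned to the better (in her preference) of her projects in $M$ and $M'$. *)

theory Defs
  imports Main
begin

text \<open>An SPA-S instance. Students of type 's, projects 'p, lecturers 'l.
  Student preference lists and lecturer preference lists are distinct lists
  (earlier = more preferred).\<close>

record ('s, 'p, 'l) spa =
  students  :: "'s set"
  projects  :: "'p set"
  lecturers :: "'l set"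
  spref     :: "'s \<Rightarrow> 'p list"
  lect      :: "'p \<Rightarrow> 'l"
  lpref     :: "'l \<Rightarrow> 's list"
  pcap      :: "'p \<Rightarrow> nat"
  lcap      :: "'l \<Rightarrow> nat"

definition offers :: "('s, 'p, 'l) spa \<Rightarrow> 'l \<Rightarrow> 'p set" where
  "offers I l = {p \<in> projects I. lect I p = l}"

definition spa_instance :: "('s, 'p, 'l) spa \<Rightarrow> bool" where
  "spa_instance I \<longleftrightarrow>
     finite (students I) \<and> finite (projects I) \<and> finite (lecturers I) \<and>
     (\<forall>s \<in> students I. distinct (spref I s) \<and> set (spref I s) \<subseteq> projects I) \<and>
     (\<forall>p \<in> projects I. lect I p \<in> lecturers I) \<and>
     (\<forall>l \<in> lecturers I. offers I l \<noteq> {}) \<and>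
     (\<forall>l \<in> lecturers I. distinct (lpref I l) \<and>
        set (lpref I l) = {s \<in> students I. \<exists>p \<in> set (spref I s). lect I p = l}) \<and>
     (\<forall>p \<in> projects I. pcap I p > 0) \<and>
     (\<forall>l \<in> lecturers I. Max (pcap I ` offers I l) \<le> lcap I l \<and>
                         lcap I l \<le> (\<Sum>p \<in> offers I l. pcap I p))"

definition pos :: "'a list \<Rightarrow> 'a \<Rightarrow> nat" where
  "pos xs x = (LEAST i. i < length xs \<and> xs ! i = x)"

definition acceptable :: "('s, 'p, 'l) spa \<Rightarrow> 's \<Rightarrow> 'p \<Rightarrow> bool" where
  "acceptable I s p \<longleftrightarrow> s \<in> students I \<and> p \<in> projects I \<and>
     p \<in> set (spref I s) \<and> s \<in> set (lpref I (lect I p))"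

definition sprefers :: "('s, 'p, 'l) spa \<Rightarrow> 's \<Rightarrow> 'p \<Rightarrow> 'p \<Rightarrow> bool" where
  "sprefers I s p q \<longleftrightarrow> p \<in> set (spref I s) \<and> q \<in> set (spref I s) \<and>
     pos (spref I s) p < pos (spref I s) q"

definition lprefers :: "('s, 'p, 'l) spa \<Rightarrow> 'l \<Rightarrow> 's \<Rightarrow> 's \<Rightarrow> bool" where
  "lprefers I l s t \<longleftrightarrow> s \<in> set (lpref I l) \<and> t \<in> set (lpref I l) \<and>
     pos (lpref I l) s < pos (lpref I l) t"

definition worst :: "('s, 'p, 'l) spa \<Rightarrow> 'l \<Rightarrow> 's set \<Rightarrow> 's" where
  "worst I l X = (ARG_MAX (\<lambda>t. pos (lpref I l) t) t. t \<in> X)"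

type_synonym ('s, 'p) assignment = "('s \<times> 'p) set"

definition assigned_p :: "('s, 'p) assignment \<Rightarrow> 'p \<Rightarrow> 's set" where
  "assigned_p M p = {s. (s, p) \<in> M}"

definition assigned_l :: "('s, 'p, 'l) spa \<Rightarrow> ('s, 'p) assignment \<Rightarrow> 'l \<Rightarrow> 's set" where
  "assigned_l I M l = {s. \<exists>p. (s, p) \<in> M \<and> lect I p = l}"

definition s_assigned :: "('s, 'p) assignment \<Rightarrow> 's \<Rightarrow> bool" where
  "s_assigned M s \<longleftrightarrow> (\<exists>p. (s, p) \<in> M)"

definition proj_of :: "('s, 'p) assignment \<Rightarrow> 's \<Rightarrow> 'p" where
  "proj_of M s = (THE p. (s, p) \<in> M)"

definition matching :: "('s, 'p, 'l) spa \<Rightarrow> ('s, 'p) assignment \<Rightarrow> bool" where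
  "matching I M \<longleftrightarrow>
     (\<forall>(s, p) \<in> M. acceptable I s p) \<and>
     (\<forall>s p q. (s, p) \<in> M \<longrightarrow> (s, q) \<in> M \<longrightarrow> p = q) \<and>
     (\<forall>p \<in> projects I. card (assigned_p M p) \<le> pcap I p) \<and>
     (\<forall>l \<in> lecturers I. card (assigned_l I M l) \<le> lcap I l)"

definition p_undersub :: "('s, 'p, 'l) spa \<Rightarrow> ('s, 'p) assignment \<Rightarrow> 'p \<Rightarrow> bool" where
  "p_undersub I M p \<longleftrightarrow> card (assigned_p M p) < pcap I p"

definition p_full :: "('s, 'p, 'l) spa \<Rightarrow> ('s, 'p) assignment \<Rightarrow> 'p \<Rightarrow> bool" where
  "p_full I M p \<longleftrightarrow> card (assigned_p M p) = pcap I p"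

definition l_undersub :: "('s, 'p, 'l) spa \<Rightarrow> ('s, 'p) assignment \<Rightarrow> 'l \<Rightarrow> bool" where
  "l_undersub I M l \<longleftrightarrow> card (assigned_l I M l) < lcap I l"

definition l_full :: "('s, 'p, 'l) spa \<Rightarrow> ('s, 'p) assignment \<Rightarrow> 'l \<Rightarrow> bool" where
  "l_full I M l \<longleftrightarrow> card (assigned_l I M l) = lcap I l"

definition blocking_pair :: "('s, 'p, 'l) spa \<Rightarrow> ('s, 'p) assignment \<Rightarrow> 's \<Rightarrow> 'p \<Rightarrow> bool" where
  "blocking_pair I M s p \<longleftrightarrow>
     (let l = lect I p in
       acceptable I s p \<and> (s, p) \<notin> M \<and>
       (\<not> s_assigned M s \<or> sprefers I s p (proj_of M s)) \<and>
       ((p_undersub I M p \<and> l_undersub I M l) \<or>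
        (p_undersub I M p \<and> l_full I M l \<and> s \<in> assigned_l I M l) \<or>
        (p_undersub I M p \<and> l_full I M l \<and>
           lprefers I l s (worst I l (assigned_l I M l))) \<or>
        (p_full I M p \<and> lprefers I l s (worst I l (assigned_p M p)))))"

definition stable :: "('s, 'p, 'l) spa \<Rightarrow> ('s, 'p) assignment \<Rightarrow> bool" where
  "stable I M \<longleftrightarrow> matching I M \<and> (\<forall>s p. \<not> blocking_pair I M s p)"

text \<open>M-wedge: each student gets the better of her projects in M and M'
  (the common project if equal; if assigned in only one of them, that project;
  unassigned if unassigned in both).\<close>
definition meet :: "('s, 'p, 'l) spa \<Rightarrow> ('s, 'p) assignment \<Rightarrow> ('s, 'p) assignment
                     \<Rightarrow> ('s, 'p) assignment" where
  "meet I M M' =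
     {(s, p). ((s, p) \<in> M \<and> (\<forall>q. (s, q) \<in> M' \<longrightarrow> q = p \<or> sprefers I s p q)) \<or>
              ((s, p) \<in> M' \<and> (\<forall>q. (s, q) \<in> M \<longrightarrow> q = p \<or> sprefers I s p q))}"

end

theory Submission
  imports Defs
begin

text \<open>Let \<open>X\<close> be the set of students strictly better off in \<open>M'\<close> than in \<open>M\<close>. Stability of
  \<open>M\<close> and \<open>M'\<close> shows that for every lecturer \<open>l\<close> at most as many students of \<open>X\<close> are
  assigned to \<open>l\<close> in \<open>M'\<close> as in \<open>M\<close>. Every student of \<open>X\<close> is assigned in \<open>M'\<close>, so summing
  over all lecturers turns these inequalities into equalities. In \<open>M\<^sup>\<and>\<close> the students of
  \<open>M(l)\<close> outside \<open>X\<close> keep their projects of \<open>l\<close> and those of \<open>X \<inter> M'(l)\<close> get theirs, so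
  \<open>|M\<^sup>\<and>(l)| \<ge> |M(l)|\<close>, and symmetrically \<open>|M\<^sup>\<and>(l)| \<ge> |M'(l)|\<close>.\<close>

lemma pos_nth:
  assumes "x \<in> set xs"
  shows "pos xs x < length xs \<and> xs ! pos xs x = x"
proof -
  obtain i where "i < length xs" "xs ! i = x"
    using assms by (auto simp: in_set_conv_nth)
  then show ?thesis
    unfolding pos_def by (metis (mono_tags, lifting) LeastI)
qed

lemma pos_eq_iff:
  assumes "x \<in> set xs" "y \<in> set xs"
  shows "pos xs x = pos xs y \<longleftrightarrow> x = y"
  using pos_nth[OF assms(1)] pos_nth[OF assms(2)] by metis

lemma sprefers_total:
  assumes "p \<in> set (spref I s)" "q \<in> set (spref I s)" "p \<noteq> q"
  shows "sprefers I s p q \<or> sprefers I s q p"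
  using assms pos_eq_iff[OF assms(1,2)] unfolding sprefers_def by auto

lemma sprefers_irrefl: "\<not> sprefers I s p p"
  unfolding sprefers_def by simp

lemma sprefers_asym: "sprefers I s p q \<Longrightarrow> \<not> sprefers I s q p"
  unfolding sprefers_def by simp

lemma lprefers_asym: "lprefers I l s t \<Longrightarrow> \<not> lprefers I l t s"
  unfolding lprefers_def by simp

lemma worst_in_and_max:
  assumes "finite S" "S \<noteq> {}"
  shows "worst I l S \<in> S \<and> (\<forall>t\<in>S. pos (lpref I l) t \<le> pos (lpref I l) (worst I l S))"
proof -
  obtain k where "k \<in> S" using assms(2) by auto
  moreover have "\<forall>t. t \<in> S \<longrightarrow> pos (lpref I l) t < Max (pos (lpref I l) ` S) + 1"
    using assms(1) by (simp add: le_imp_less_Suc)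
  ultimately show ?thesis
    unfolding worst_def using arg_max_nat_lemma[of "\<lambda>t. t \<in> S"] by blast
qed

lemma lprefers_all_if_not_lprefers_worst:
  assumes "finite S" "S \<subseteq> set (lpref I l)" "s \<in> set (lpref I l)" "s \<notin> S"
    and "\<not> lprefers I l s (worst I l S)"
  shows "\<forall>t\<in>S. lprefers I l t s"
proof (cases "S = {}")
  case False
  note worst = worst_in_and_max[OF assms(1) False, of I l]
  then have "worst I l S \<noteq> s" using assms(4) by auto
  then have "pos (lpref I l) (worst I l S) < pos (lpref I l) s"
    using worst assms(2,3,5) pos_eq_iff[of "worst I l S" "lpref I l" s]
    unfolding lprefers_def by fastforce
  then show ?thesis using worst assms(2,3) unfolding lprefers_def by fastforce
qed simp

lemma matching_acceptable: "matching I M \<Longrightarrow> (s, p) \<in> M \<Longrightarrow> acceptable I s p"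
  unfolding matching_def by auto

lemma matching_unique: "matching I M \<Longrightarrow> (s, p) \<in> M \<Longrightarrow> (s, q) \<in> M \<Longrightarrow> p = q"
  unfolding matching_def by blast

lemma proj_of_eq: "matching I M \<Longrightarrow> (s, p) \<in> M \<Longrightarrow> proj_of M s = p"
  unfolding proj_of_def using matching_unique by (metis the_equality)

lemma assigned_p_subset_lpref: "matching I M \<Longrightarrow> assigned_p M q \<subseteq> set (lpref I (lect I q))"
  using matching_acceptable unfolding assigned_p_def acceptable_def by fastforce

lemma assigned_l_subset_lpref: "matching I M \<Longrightarrow> assigned_l I M l \<subseteq> set (lpref I l)"
  using matching_acceptable unfolding assigned_l_def acceptable_def by fastforce

lemma assigned_l_subset_students: "matching I M \<Longrightarrow> assigned_l I M l \<subseteq> students I"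
  using matching_acceptable unfolding assigned_l_def acceptable_def by fastforce

lemma assigned_p_subset_assigned_l: "assigned_p M q \<subseteq> assigned_l I M (lect I q)"
  unfolding assigned_p_def assigned_l_def by auto

lemma finite_assigned_l:
  "finite (students I) \<Longrightarrow> matching I M \<Longrightarrow> finite (assigned_l I M l)"
  using assigned_l_subset_students finite_subset by metis

lemma finite_assigned_p:
  "finite (students I) \<Longrightarrow> matching I M \<Longrightarrow> finite (assigned_p M q)"
  using finite_assigned_l assigned_p_subset_assigned_l finite_subset by metis

lemma card_Int_assigned_l_eq_sum:
  assumes "finite (students I)" "finite (projects I)" "matching I M"
  shows "card (S \<inter> assigned_l I M l) = (\<Sum>q\<in>offers I l. card (S \<inter> assigned_p M q))"
proof -
  have "S \<inter> assigned_l I M l = (\<Union>q\<in>offers I l. S \<inter> assigned_p M q)"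
    using matching_acceptable[OF assms(3)]
    unfolding assigned_l_def assigned_p_def offers_def acceptable_def by fastforce
  moreover have "finite (offers I l)" using assms(2) unfolding offers_def by simp
  moreover have "(S \<inter> assigned_p M q) \<inter> (S \<inter> assigned_p M q') = {}" if "q \<noteq> q'" for q q'
    using matching_unique[OF assms(3)] that unfolding assigned_p_def by blast
  ultimately show ?thesis
    using card_UN_disjoint[of "offers I l" "\<lambda>q. S \<inter> assigned_p M q"]
      finite_assigned_p[OF assms(1,3)] by simp
qed

lemma card_Int_assigned_l_mono:
  assumes "finite (students I)" "finite (projects I)" "matching I M" "matching I M'"
    and "\<And>q. q \<in> offers I l \<Longrightarrow> card (S \<inter> assigned_p M q) \<le> card (S \<inter> assigned_p M' q)"
  shows "card (S \<inter> assigned_l I M l) \<le> card (S \<inter> assigned_l I M' l)"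
  using card_Int_assigned_l_eq_sum[OF assms(1,2,3)] card_Int_assigned_l_eq_sum[OF assms(1,2,4)]
    assms(5) sum_mono by metis

lemma sum_card_Int_assigned_l:
  assumes "spa_instance I" "matching I M"
  shows "(\<Sum>l\<in>lecturers I. card (S \<inter> assigned_l I M l)) = card (S \<inter> {s. s_assigned M s})"
proof -
  have "S \<inter> {s. s_assigned M s} = (\<Union>l\<in>lecturers I. S \<inter> assigned_l I M l)"
    using assms matching_acceptable[OF assms(2)]
    unfolding spa_instance_def s_assigned_def assigned_l_def acceptable_def by fastforce
  moreover have "(S \<inter> assigned_l I M l) \<inter> (S \<inter> assigned_l I M l') = {}" if "l \<noteq> l'" for l l'
    using matching_unique[OF assms(2)] that unfolding assigned_l_def by blast
  moreover have "finite (students I)" "finite (lecturers I)"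
    using assms(1) unfolding spa_instance_def by simp_all
  ultimately show ?thesis
    using card_UN_disjoint[of "lecturers I" "\<lambda>l. S \<inter> assigned_l I M l"]
      finite_assigned_l[OF _ assms(2)] by simp
qed

section \<open>Students better off in another matching\<close>

definition better_off :: "('s, 'p, 'l) spa \<Rightarrow> ('s, 'p) assignment \<Rightarrow> ('s, 'p) assignment \<Rightarrow> 's set" where
  "better_off I M M' = {s. \<exists>q. (s, q) \<in> M' \<and> (\<forall>p. (s, p) \<in> M \<longrightarrow> sprefers I s q p)}"

definition prefers_to_current :: "('s, 'p, 'l) spa \<Rightarrow> ('s, 'p) assignment \<Rightarrow> 's \<Rightarrow> 'p \<Rightarrow> bool" where
  "prefers_to_current I M s q \<longleftrightarrow>
     (s, q) \<notin> M \<and> (\<not> s_assigned M s \<or> sprefers I s q (proj_of M s))"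

lemma better_off_subset_assigned: "better_off I M M' \<subseteq> {s. s_assigned M' s}"
  unfolding better_off_def s_assigned_def by auto

lemma better_off_prefers_to_current:
  assumes "matching I M" "matching I M'" "s \<in> better_off I M M'" "(s, q) \<in> M'"
  shows "prefers_to_current I M s q"
proof -
  have better: "sprefers I s q p" if "(s, p) \<in> M" for p
    using assms(3) matching_unique[OF assms(2) _ assms(4)] that unfolding better_off_def by blast
  then have "(s, q) \<notin> M" by (metis sprefers_irrefl)
  moreover have "sprefers I s q (proj_of M s)" if "s_assigned M s"
    using that better proj_of_eq[OF assms(1)] unfolding s_assigned_def by blast
  ultimately show ?thesis unfolding prefers_to_current_def by blast
qed

lemma not_better_off_if_common:
  assumes "matching I M'" "(s, p) \<in> M" "(s, p) \<in> M'"
  shows "s \<notin> better_off I M M'"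
proof
  assume "s \<in> better_off I M M'"
  then obtain q where q: "(s, q) \<in> M'" "sprefers I s q p"
    using assms(2) unfolding better_off_def by blast
  have "q = p" using matching_unique[OF assms(1) q(1) assms(3)] .
  then show False using q(2) by (simp add: sprefers_irrefl)
qed

lemma better_off_disjoint: "better_off I M M' \<inter> better_off I M' M = {}"
proof -
  have False if s: "s \<in> better_off I M M'" "s \<in> better_off I M' M" for s
  proof -
    obtain q where q: "(s, q) \<in> M'" "\<forall>p. (s, p) \<in> M \<longrightarrow> sprefers I s q p"
      using s(1) unfolding better_off_def by blast
    obtain p where p: "(s, p) \<in> M" "\<forall>q. (s, q) \<in> M' \<longrightarrow> sprefers I s p q"
      using s(2) unfolding better_off_def by blast
    have "sprefers I s q p" using q(2) p(1) by blast
    moreover have "sprefers I s p q" using p(2) q(1) by blast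
    ultimately show False by (blast dest: sprefers_asym)
  qed
  then show ?thesis by blast
qed

lemma better_off_cases:
  assumes "matching I M" "matching I M'" "(s, p) \<in> M"
  shows "(s, p) \<in> M' \<or> s \<in> better_off I M M' \<or> s \<in> better_off I M' M"
proof (cases "\<exists>q. (s, q) \<in> M'")
  case True
  then obtain q where q: "(s, q) \<in> M'" by blast
  have p_in: "p \<in> set (spref I s)"
    using matching_acceptable[OF assms(1,3)] unfolding acceptable_def by simp
  have q_in: "q \<in> set (spref I s)"
    using matching_acceptable[OF assms(2) q] unfolding acceptable_def by simp
  consider "p = q" | "sprefers I s q p" | "sprefers I s p q"
    using sprefers_total[OF p_in q_in] by metis
  then show ?thesis
  proof cases
    case 1
    then show ?thesis using q by simp
  next
    case 2
    have "\<forall>p'. (s, p') \<in> M \<longrightarrow> sprefers I s q p'"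
      using 2 matching_unique[OF assms(1) _ assms(3)] by metis
    then show ?thesis using q unfolding better_off_def by blast
  next
    case 3
    have "\<forall>q'. (s, q') \<in> M' \<longrightarrow> sprefers I s p q'"
      using 3 matching_unique[OF assms(2) _ q] by metis
    then show ?thesis using assms(3) unfolding better_off_def by blast
  qed
next
  case False
  then show ?thesis using assms(3) unfolding better_off_def by blast
qed

lemma card_assigned_l_split:
  assumes "finite (students I)" "matching I M" "matching I M'"
  shows "card (assigned_l I M l) = card (assigned_l I (M \<inter> M') l)
    + card (better_off I M M' \<inter> assigned_l I M l) + card (better_off I M' M \<inter> assigned_l I M l)"
proof -
  let ?C = "assigned_l I (M \<inter> M') l"
  let ?X = "better_off I M M' \<inter> assigned_l I M l"
  let ?Y = "better_off I M' M \<inter> assigned_l I M l"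
  have C_sub: "?C \<subseteq> assigned_l I M l" unfolding assigned_l_def by blast
  have split: "assigned_l I M l = ?C \<union> ?X \<union> ?Y"
  proof
    show "assigned_l I M l \<subseteq> ?C \<union> ?X \<union> ?Y"
    proof
      fix s assume "s \<in> assigned_l I M l"
      then obtain p where "(s, p) \<in> M" "lect I p = l" unfolding assigned_l_def by blast
      then show "s \<in> ?C \<union> ?X \<union> ?Y"
        using better_off_cases[OF assms(2,3)] unfolding assigned_l_def by blast
    qed
  qed (use C_sub in blast)
  have fin: "finite (assigned_l I M l)" using finite_assigned_l[OF assms(1,2)] .
  have "?C \<inter> ?X = {}"
    using not_better_off_if_common[OF assms(3)] unfolding assigned_l_def by blast
  moreover have "(?C \<union> ?X) \<inter> ?Y = {}"
    using not_better_off_if_common[OF assms(2)] better_off_disjoint[of I M M']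
    unfolding assigned_l_def by blast
  ultimately have "card (?C \<union> ?X \<union> ?Y) = card ?C + card ?X + card ?Y"
    using fin C_sub by (simp add: card_Un_disjoint finite_subset)
  with split show ?thesis by (metis (no_types))
qed

section \<open>Stability and counting at a lecturer\<close>

lemma stable_imp_matching: "stable I M \<Longrightarrow> matching I M"
  unfolding stable_def by simp

lemma stable_outranked:
  assumes inst: "spa_instance I" and stable: "stable I M"
    and acc: "acceptable I s q" and wants: "prefers_to_current I M s q"
  shows "(p_full I M q \<and> (\<forall>t\<in>assigned_p M q. lprefers I (lect I q) t s)) \<or>
    (l_full I M (lect I q) \<and> (\<forall>t\<in>assigned_l I M (lect I q). lprefers I (lect I q) t s))"
proof -
  let ?l = "lect I q"
  have M: "matching I M" using stable_imp_matching[OF stable] .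
  have fin: "finite (students I)" using inst unfolding spa_instance_def by simp
  have q: "q \<in> projects I" and s_l: "s \<in> set (lpref I ?l)"
    using acc unfolding acceptable_def by simp_all
  have l: "?l \<in> lecturers I" using inst q unfolding spa_instance_def by simp
  have s_q: "s \<notin> assigned_p M q" using wants unfolding prefers_to_current_def assigned_p_def by simp
  have no_block: "\<not> ((p_undersub I M q \<and> l_undersub I M ?l) \<or>
      (p_undersub I M q \<and> l_full I M ?l \<and> s \<in> assigned_l I M ?l) \<or>
      (p_undersub I M q \<and> l_full I M ?l \<and> lprefers I ?l s (worst I ?l (assigned_l I M ?l))) \<or>
      (p_full I M q \<and> lprefers I ?l s (worst I ?l (assigned_p M q))))"
    using stable acc wants unfolding stable_def blocking_pair_def prefers_to_current_def Let_def
    by blast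
  show ?thesis
  proof (cases "p_full I M q")
    case True
    then show ?thesis
      using no_block lprefers_all_if_not_lprefers_worst[OF finite_assigned_p[OF fin M]
          assigned_p_subset_lpref[OF M] s_l s_q]
      by blast
  next
    case False
    then have "p_undersub I M q"
      using M q unfolding matching_def p_full_def p_undersub_def by (simp add: le_neq_implies_less)
    moreover have "\<not> l_undersub I M ?l \<longrightarrow> l_full I M ?l"
      using M l unfolding matching_def l_full_def l_undersub_def by auto
    ultimately show ?thesis
      using no_block lprefers_all_if_not_lprefers_worst[OF finite_assigned_l[OF fin M]
          assigned_l_subset_lpref[OF M] s_l]
      by blast
  qed
qed

lemma stable_outranked_at_project:
  assumes "spa_instance I" "stable I M" "acceptable I s q" "prefers_to_current I M s q"
    and "s' \<in> assigned_l I M (lect I q)" "lprefers I (lect I q) s s'"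
  shows "p_full I M q \<and> (\<forall>t\<in>assigned_p M q. lprefers I (lect I q) t s)"
  using stable_outranked[OF assms(1-4)] assms(5,6) by (blast dest: lprefers_asym)

text \<open>Everyone who leaves \<open>q\<close> on passing from \<open>M\<close> to \<open>M'\<close> is better off in \<open>M'\<close>:
  otherwise, being preferred to \<open>s \<in> M'(q)\<close>, she would block \<open>M'\<close> at \<open>q\<close>.
  As \<open>|M'(q)| \<le> |M(q)|\<close>, at least as many leave \<open>q\<close> as join it.\<close>

lemma card_better_off_project_le:
  assumes inst: "spa_instance I" and M: "matching I M" and stable': "stable I M'"
    and s: "(s, q) \<in> M'" and full: "p_full I M q"
    and outranked: "\<forall>t\<in>assigned_p M q. lprefers I (lect I q) t s"
  shows "card (better_off I M M' \<inter> assigned_p M' q) \<le> card (better_off I M M' \<inter> assigned_p M q)"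
proof -
  let ?X = "better_off I M M'"
  have M': "matching I M'" using stable_imp_matching[OF stable'] .
  have fin: "finite (students I)" using inst unfolding spa_instance_def by simp
  have q: "q \<in> projects I" using matching_acceptable[OF M' s] unfolding acceptable_def by simp
  have leavers: "assigned_p M q - assigned_p M' q \<subseteq> ?X"
  proof
    fix t assume t: "t \<in> assigned_p M q - assigned_p M' q"
    then have tq: "(t, q) \<in> M" "(t, q) \<notin> M'" unfolding assigned_p_def by simp_all
    show "t \<in> ?X"
    proof (rule ccontr)
      assume "t \<notin> ?X"
      then have "t \<in> better_off I M' M" using better_off_cases[OF M M' tq(1)] tq(2) by blast
      then have "prefers_to_current I M' t q"
        using better_off_prefers_to_current[OF M' M _ tq(1)] by blast
      moreover have "s \<in> assigned_l I M' (lect I q)" using s unfolding assigned_l_def by blast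
      moreover have "lprefers I (lect I q) t s" using outranked t by blast
      ultimately have "lprefers I (lect I q) s t"
        using stable_outranked_at_project[OF inst stable' matching_acceptable[OF M tq(1)]] s
        unfolding assigned_p_def by blast
      then show False using \<open>lprefers I (lect I q) t s\<close> by (blast dest: lprefers_asym)
    qed
  qed
  have joiners: "?X \<inter> assigned_p M' q \<subseteq> assigned_p M' q - assigned_p M q"
    using not_better_off_if_common[OF M'] unfolding assigned_p_def by blast
  have fin_q: "finite (assigned_p M q)" "finite (assigned_p M' q)"
    using finite_assigned_p[OF fin M] finite_assigned_p[OF fin M'] .
  have capacity: "card (assigned_p M' q) \<le> card (assigned_p M q)"
    using M' q full unfolding matching_def p_full_def by simp
  have "card (?X \<inter> assigned_p M' q) \<le> card (assigned_p M' q - assigned_p M q)"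
    using joiners fin_q by (simp add: card_mono)
  also have "\<dots> \<le> card (assigned_p M q - assigned_p M' q)"
    using card_le_sym_Diff fin_q capacity by blast
  also have "\<dots> \<le> card (?X \<inter> assigned_p M q)"
    using leavers fin_q by (intro card_mono) auto
  finally show ?thesis .
qed

lemma card_better_off_lecturer_le_if_outranked:
  assumes inst: "spa_instance I" and stable: "stable I M" and stable': "stable I M'"
    and s: "s \<in> assigned_l I M l" and outranked: "\<forall>t\<in>assigned_l I M' l. lprefers I l t s"
  shows "card (better_off I M M' \<inter> assigned_l I M' l) \<le> card (better_off I M M' \<inter> assigned_l I M l)"
proof -
  let ?X = "better_off I M M'"
  have M: "matching I M" and M': "matching I M'"
    using stable stable' by (simp_all add: stable_imp_matching)
  have fin: "finite (students I)" "finite (projects I)"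
    using inst unfolding spa_instance_def by simp_all
  have "card (?X \<inter> assigned_p M' p) \<le> card (?X \<inter> assigned_p M p)" if p: "p \<in> offers I l" for p
  proof (cases "?X \<inter> assigned_p M' p = {}")
    case False
    then obtain t where t: "t \<in> ?X" "(t, p) \<in> M'" unfolding assigned_p_def by blast
    have l: "lect I p = l" using p unfolding offers_def by simp
    have "lprefers I l t s" using outranked t(2) l unfolding assigned_l_def by blast
    then have "p_full I M p \<and> (\<forall>u\<in>assigned_p M p. lprefers I (lect I p) u t)"
      using stable_outranked_at_project[OF inst stable matching_acceptable[OF M' t(2)]
          better_off_prefers_to_current[OF M M' t]] s l
      by blast
    then show ?thesis using card_better_off_project_le[OF inst M stable' t(2)] by blast
  qed simp
  then show ?thesis using card_Int_assigned_l_mono[OF fin M' M] by blast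
qed

text \<open>If \<open>l\<close> is full in \<open>M\<close> and prefers all of \<open>M(l)\<close> to some student of \<open>X \<inter> M'(l)\<close>,
  the students worse off in \<open>M'\<close> cannot gain at \<open>l\<close>, and splitting \<open>M(l)\<close> and \<open>M'(l)\<close>
  into common, better-off and worse-off students gives the bound since \<open>|M'(l)| \<le> |M(l)|\<close>.
  Otherwise stability of \<open>M\<close> makes every project of \<open>l\<close> that receives a student of \<open>X\<close> in
  \<open>M'\<close> full in \<open>M\<close> with students preferred to her, and the bound holds project by project.\<close>

lemma card_better_off_lecturer_le:
  assumes inst: "spa_instance I" and stable: "stable I M" and stable': "stable I M'"
    and l: "l \<in> lecturers I"
  shows "card (better_off I M M' \<inter> assigned_l I M' l) \<le> card (better_off I M M' \<inter> assigned_l I M l)"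
proof -
  let ?X = "better_off I M M'"
  have M: "matching I M" and M': "matching I M'"
    using stable stable' by (simp_all add: stable_imp_matching)
  have fin: "finite (students I)" "finite (projects I)"
    using inst unfolding spa_instance_def by simp_all
  show ?thesis
  proof (cases "\<exists>s\<in>?X \<inter> assigned_l I M' l. l_full I M l \<and> (\<forall>t\<in>assigned_l I M l. lprefers I l t s)")
    case True
    then obtain s where s: "s \<in> assigned_l I M' l" "l_full I M l"
      "\<forall>t\<in>assigned_l I M l. lprefers I l t s" by blast
    have "card (assigned_l I M' l) \<le> card (assigned_l I M l)"
      using M' l s(2) unfolding matching_def l_full_def by simp
    moreover have "card (assigned_l I (M' \<inter> M) l) = card (assigned_l I (M \<inter> M') l)"
      by (simp add: Int_commute)
    ultimately show ?thesis
      using card_assigned_l_split[OF fin(1) M M', of l] card_assigned_l_split[OF fin(1) M' M, of l]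
        card_better_off_lecturer_le_if_outranked[OF inst stable' stable s(1,3)]
      by linarith
  next
    case False
    then have not_rejected: "\<not> (l_full I M l \<and> (\<forall>t\<in>assigned_l I M l. lprefers I l t s))"
      if "s \<in> ?X \<inter> assigned_l I M' l" for s
      using that by blast
    have "card (?X \<inter> assigned_p M' q) \<le> card (?X \<inter> assigned_p M q)" if q: "q \<in> offers I l" for q
    proof (cases "?X \<inter> assigned_p M' q = {}")
      case False
      then obtain s where s: "s \<in> ?X" "(s, q) \<in> M'" unfolding assigned_p_def by blast
      have "lect I q = l" using q unfolding offers_def by simp
      then have "s \<in> ?X \<inter> assigned_l I M' l" using s unfolding assigned_l_def by blast
      then have "p_full I M q \<and> (\<forall>t\<in>assigned_p M q. lprefers I (lect I q) t s)"
        using stable_outranked[OF inst stable matching_acceptable[OF M' s(2)]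
            better_off_prefers_to_current[OF M M' s]] \<open>lect I q = l\<close> not_rejected
        by blast
      then show ?thesis using card_better_off_project_le[OF inst M stable' s(2)] by blast
    qed simp
    then show ?thesis using card_Int_assigned_l_mono[OF fin M' M] by blast
  qed
qed

text \<open>Every better-off student is assigned in \<open>M'\<close>, so summing the inequality over
  all lecturers compares \<open>|X|\<close> with at most \<open>|X|\<close>; hence it is an equality everywhere.\<close>

lemma card_better_off_lecturer_eq:
  assumes inst: "spa_instance I" and stable: "stable I M" and stable': "stable I M'"
    and l: "l \<in> lecturers I"
  shows "card (better_off I M M' \<inter> assigned_l I M' l) = card (better_off I M M' \<inter> assigned_l I M l)"
proof -
  let ?X = "better_off I M M'"
  let ?f = "\<lambda>k. card (?X \<inter> assigned_l I M' k)" and ?g = "\<lambda>k. card (?X \<inter> assigned_l I M k)"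
  have M: "matching I M" and M': "matching I M'"
    using stable stable' by (simp_all add: stable_imp_matching)
  have fin: "finite (lecturers I)" "finite (students I)"
    using inst unfolding spa_instance_def by simp_all
  have "?X \<subseteq> students I"
    using matching_acceptable[OF M'] unfolding better_off_def acceptable_def by blast
  then have fin_X: "finite ?X" using fin(2) finite_subset by blast
  have le: "?f k \<le> ?g k" if "k \<in> lecturers I" for k
    using card_better_off_lecturer_le[OF inst stable stable' that] .
  have "(\<Sum>k\<in>lecturers I. ?f k) = card ?X"
    using sum_card_Int_assigned_l[OF inst M'] better_off_subset_assigned
    by (metis inf.absorb1)
  also have "\<dots> \<ge> (\<Sum>k\<in>lecturers I. ?g k)"
    using sum_card_Int_assigned_l[OF inst M] fin_X by (simp add: card_mono)
  finally have "(\<Sum>k\<in>lecturers I. ?g k) \<le> (\<Sum>k\<in>lecturers I. ?f k)" .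
  moreover have "(\<Sum>k\<in>lecturers I. ?f k) \<le> (\<Sum>k\<in>lecturers I. ?g k)"
    by (intro sum_mono le)
  ultimately have "(\<Sum>k\<in>lecturers I. ?f k) = (\<Sum>k\<in>lecturers I. ?g k)" by linarith
  then show ?thesis using sum_mono_inv[of ?f "lecturers I" ?g l] le l fin(1) by blast
qed

lemma assigned_l_meet_superset:
  assumes M: "matching I M" and M': "matching I M'"
  shows "(assigned_l I M l - better_off I M M') \<union> (better_off I M M' \<inter> assigned_l I M' l)
    \<subseteq> assigned_l I (meet I M M') l"
proof
  fix s assume "s \<in> (assigned_l I M l - better_off I M M') \<union> (better_off I M M' \<inter> assigned_l I M' l)"
  then consider (stays) p where "(s, p) \<in> M" "lect I p = l" "s \<notin> better_off I M M'"
    | (moves) q where "(s, q) \<in> M'" "lect I q = l" "s \<in> better_off I M M'"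
    unfolding assigned_l_def by blast
  then show "s \<in> assigned_l I (meet I M M') l"
  proof cases
    case stays
    have "q = p \<or> sprefers I s p q" if q: "(s, q) \<in> M'" for q
    proof -
      have "p \<in> set (spref I s)" "q \<in> set (spref I s)"
        using matching_acceptable[OF M stays(1)] matching_acceptable[OF M' q]
        unfolding acceptable_def by simp_all
      moreover have "\<not> sprefers I s q p"
        using stays(3) q matching_unique[OF M stays(1)] unfolding better_off_def by blast
      ultimately show ?thesis using sprefers_total[of p I s q] by blast
    qed
    then show ?thesis using stays(1,2) unfolding meet_def assigned_l_def by blast
  next
    case moves
    have "\<forall>p. (s, p) \<in> M \<longrightarrow> sprefers I s q p"
      using moves(3) matching_unique[OF M' _ moves(1)] unfolding better_off_def by blast
    then show ?thesis using moves(1,2) unfolding meet_def assigned_l_def by blast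
  qed
qed

lemma card_assigned_l_le_meet:
  assumes inst: "spa_instance I" and stable: "stable I M" and stable': "stable I M'"
    and l: "l \<in> lecturers I"
  shows "card (assigned_l I M l) \<le> card (assigned_l I (meet I M M') l)"
proof -
  let ?X = "better_off I M M'"
  have M: "matching I M" and M': "matching I M'"
    using stable stable' by (simp_all add: stable_imp_matching)
  have fin: "finite (students I)" using inst unfolding spa_instance_def by simp
  have fin_l: "finite (assigned_l I M l)" "finite (assigned_l I M' l)"
    using finite_assigned_l[OF fin M] finite_assigned_l[OF fin M'] .
  have "assigned_l I (meet I M M') l \<subseteq> assigned_l I M l \<union> assigned_l I M' l"
    unfolding meet_def assigned_l_def by blast
  then have fin_meet: "finite (assigned_l I (meet I M M') l)"
    using fin_l finite_subset by blast
  have "card (assigned_l I M l) = card (assigned_l I M l - ?X) + card (?X \<inter> assigned_l I M l)"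
    using card_Int_Diff[OF fin_l(1), of ?X] by (simp add: Int_commute)
  also have "\<dots> = card (assigned_l I M l - ?X) + card (?X \<inter> assigned_l I M' l)"
    using card_better_off_lecturer_eq[OF inst stable stable' l] by simp
  also have "\<dots> = card ((assigned_l I M l - ?X) \<union> (?X \<inter> assigned_l I M' l))"
    using fin_l by (intro card_Un_disjoint[symmetric]) auto
  also have "\<dots> \<le> card (assigned_l I (meet I M M') l)"
    using card_mono[OF fin_meet assigned_l_meet_superset[OF M M']] .
  finally show ?thesis .
qed

lemma meet_commute: "meet I M M' = meet I M' M"
  unfolding meet_def by blast

theorem lemma5:
  fixes I :: "('s, 'p, 'l) spa" and M M' :: "('s, 'p) assignment" and l :: 'l
  assumes "spa_instance I"
    and "stable I M" and "stable I M'"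
    and "l \<in> lecturers I"
    and "l_undersub I (meet I M M') l"
  shows "l_undersub I M l \<and> l_undersub I M' l"
proof -
  have "card (assigned_l I M l) \<le> card (assigned_l I (meet I M M') l)"
    using card_assigned_l_le_meet[OF assms(1-4)] .
  moreover have "card (assigned_l I M' l) \<le> card (assigned_l I (meet I M M') l)"
    using card_assigned_l_le_meet[OF assms(1,3,2,4)] by (simp add: meet_commute)
  ultimately show ?thesis using assms(5) unfolding l_undersub_def by linarith
qed

end
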